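(* Let $p\ge1$ and let $q\in[1,\infty]$ satisfy $\frac1p+\frac1q=1$. Then the function $f(\mathbf s,\mathbf u)$ is continuous on $\mathcal S\times\mathcal U$. Additionally, for any fixed $\mathbf s\in\mathcal S$, $f(\mathbf s,\mathbf u)$ is Lipschitz continuous in $\mathbf u$ with respect to $\|\cdot\|_p$, with Lipschitz constant $L:=\max_{\mathbf y\in\mathcal Y}\|\mathbf y\|_q<\infty$.
   Context: $n\ge1$, $T>0$, $\mathcal S=\{\mathbf s\in\mathbb R^n:\mathbf s\ge0,\sum_is_i\le T\}$; $\mathcal U\subseteq\mathbb R^n$ is the support set of the service durations. Costs $\mathbf c,\mathbf d\in\mathbb R^n_+$, $C\ge0$ with $d_{i+1}-d_i\le c_{i+1}$ for $i=1,\dots,n-1$. $f(\mathbf s,\mathbf u)$ is the optimal value of $\min_{\mathbf w\in\mathbb R^{n+1},\mathbf v\in\mathbb R^n}\sum_{i=1}^n(c_iw_i+d_iv_i)+Cw_{n+1}$ s.t. $w_i-v_{i-1}=u_{i-1}+w_{i-1}-s_{i-1}$ ($i=2,\dots,n+1$), $\mathbf w\ge0,w_1=0,\mathbf v\ge0$. $\mathcal Y=\{\mathbf y\in\mathbb R^n:-y_i\le d_i\ \forall i;\ y_{i-1}-y_i\le c_i\ (i=2,\dots,n);\ y_n\le C\}$. *)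

theory Defs
  imports "HOL-Analysis.Analysis" "HOL-Library.Extended_Real"
begin

text \<open>Vectors in R^n are modelled as functions nat \<Rightarrow> real indexed by 1..n,
  vanishing outside {1..n}.\<close>

definition vecs :: "nat \<Rightarrow> (nat \<Rightarrow> real) set" where
  "vecs n = {x. \<forall>i. i \<notin> {1..n} \<longrightarrow> x i = 0}"

definition Sset :: "nat \<Rightarrow> real \<Rightarrow> (nat \<Rightarrow> real) set" where
  "Sset n T = {s \<in> vecs n. (\<forall>i\<in>{1..n}. s i \<ge> 0) \<and> (\<Sum>i=1..n. s i) \<le> T}"

definition feasible :: "nat \<Rightarrow> (nat \<Rightarrow> real) \<Rightarrow> (nat \<Rightarrow> real) \<Rightarrow> (nat \<Rightarrow> real) \<Rightarrow> (nat \<Rightarrow> real) \<Rightarrow> bool" where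
  "feasible n s u w v \<longleftrightarrow>
     (\<forall>i\<in>{2..n+1}. w i - v (i-1) = u (i-1) + w (i-1) - s (i-1)) \<and>
     (\<forall>i\<in>{1..n+1}. w i \<ge> 0) \<and> w 1 = 0 \<and> (\<forall>i\<in>{1..n}. v i \<ge> 0)"

definition obj :: "nat \<Rightarrow> (nat \<Rightarrow> real) \<Rightarrow> (nat \<Rightarrow> real) \<Rightarrow> real \<Rightarrow> (nat \<Rightarrow> real) \<Rightarrow> (nat \<Rightarrow> real) \<Rightarrow> real" where
  "obj n c d C w v = (\<Sum>i=1..n. c i * w i + d i * v i) + C * w (n+1)"

definition fval :: "nat \<Rightarrow> (nat \<Rightarrow> real) \<Rightarrow> (nat \<Rightarrow> real) \<Rightarrow> real \<Rightarrow> (nat \<Rightarrow> real) \<Rightarrow> (nat \<Rightarrow> real) \<Rightarrow> real" where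
  "fval n c d C s u = Inf {obj n c d C w v | w v. feasible n s u w v}"

definition Yset :: "nat \<Rightarrow> (nat \<Rightarrow> real) \<Rightarrow> (nat \<Rightarrow> real) \<Rightarrow> real \<Rightarrow> (nat \<Rightarrow> real) set" where
  "Yset n c d C = {y \<in> vecs n. (\<forall>i\<in>{1..n}. - y i \<le> d i) \<and>
      (\<forall>i\<in>{2..n}. y (i-1) - y i \<le> c i) \<and> y n \<le> C}"

definition pnorm :: "nat \<Rightarrow> real \<Rightarrow> (nat \<Rightarrow> real) \<Rightarrow> real" where
  "pnorm n p x = (\<Sum>i=1..n. \<bar>x i\<bar> powr p) powr (1/p)"

definition qnorm :: "nat \<Rightarrow> ereal \<Rightarrow> (nat \<Rightarrow> real) \<Rightarrow> real" where
  "qnorm n q y = (if q = \<infinity> then Max ((\<lambda>i. \<bar>y i\<bar>) ` {1..n})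
                  else (\<Sum>i=1..n. \<bar>y i\<bar> powr real_of_ereal q) powr (1 / real_of_ereal q))"

end

theory Submission
  imports Defs
begin

text \<open>By linear programming duality, f(s, u) is the maximum of the linear functions
  y \<mapsto> \<langle>y, u - s\<rangle> over the dual polytope Y. Strong duality is shown by an explicit primal-dual
  pair: the waiting times of Lindley's recursion are primal optimal, and a dual vector built
  backwards from y_n satisfies complementary slackness with them. Y is compact, so f is a
  maximum of uniformly bounded linear functions of u - s: it is Lipschitz in the 1-norm of
  u - s (hence continuous), and Hoelder's inequality bounds its variation in u by
  max_Y \<parallel>y\<parallel>_q \<parallel>u_1 - u_2\<parallel>_p.\<close>

lemma sum_by_parts_shift:
  fixes y w :: "nat \<Rightarrow> 'a::comm_ring"
  assumes "m \<ge> 1"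
  shows "(\<Sum>i=1..m. y i * (w (i+1) - w i)) =
    y m * w (m+1) - y 1 * w 1 + (\<Sum>i=2..m. (y (i-1) - y i) * w i)"
  using assms
proof (induction m rule: nat_induct_at_least)
  case base
  then show ?case by (simp add: algebra_simps)
next
  case (Suc m)
  then show ?case by (simp add: sum.cl_ivl_Suc algebra_simps)
qed

lemma obj_eq_dual_plus_slack:
  assumes n: "n \<ge> 1" and f: "feasible n s u w v"
  shows "obj n c d C w v = (\<Sum>i=1..n. y i * (u i - s i))
    + (\<Sum>i=1..n. (d i + y i) * v i) + (\<Sum>i=2..n. (c i - (y (i-1) - y i)) * w i)
    + (C - y n) * w (n+1)"
proof -
  have w1: "w 1 = 0" using f by (simp add: feasible_def)
  have flow: "u i - s i = (w (i+1) - w i) - v i" if "i \<in> {1..n}" for i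
  proof -
    have "i + 1 \<in> {2..n+1}" using that by auto
    then show ?thesis using f unfolding feasible_def by fastforce
  qed
  have "(\<Sum>i=1..n. y i * (u i - s i)) =
      (\<Sum>i=1..n. y i * (w (i+1) - w i)) - (\<Sum>i=1..n. y i * v i)"
    by (simp add: flow right_diff_distrib sum_subtractf)
  also have "\<dots> = y n * w (n+1) + (\<Sum>i=2..n. (y (i-1) - y i) * w i) - (\<Sum>i=1..n. y i * v i)"
    using sum_by_parts_shift[OF n, of y w] w1 by simp
  finally have dual: "(\<Sum>i=1..n. y i * (u i - s i)) = \<dots>" .
  have "(\<Sum>i=1..n. c i * w i) = (\<Sum>i=2..n. c i * w i)"
    using w1 n by (simp add: sum.atLeast_Suc_atMost numeral_2_eq_2)
  then have "obj n c d C w v = (\<Sum>i=2..n. c i * w i) + (\<Sum>i=1..n. d i * v i) + C * w (n+1)"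
    by (simp add: obj_def sum.distrib)
  then show ?thesis unfolding dual
    by (simp add: algebra_simps sum.distrib sum_subtractf)
qed

lemma weak_duality:
  assumes n: "n \<ge> 1" and f: "feasible n s u w v" and y: "y \<in> Yset n c d C"
  shows "(\<Sum>i=1..n. y i * (u i - s i)) \<le> obj n c d C w v"
proof -
  have "0 \<le> (\<Sum>i=1..n. (d i + y i) * v i)"
  proof (rule sum_nonneg)
    fix i assume i: "i \<in> {1..n}"
    have "- y i \<le> d i" "0 \<le> v i" using y f i unfolding Yset_def feasible_def by blast+
    then show "0 \<le> (d i + y i) * v i" by simp
  qed
  moreover have "0 \<le> (\<Sum>i=2..n. (c i - (y (i-1) - y i)) * w i)"
  proof (rule sum_nonneg)
    fix i assume i: "i \<in> {2..n}"
    have "y (i-1) - y i \<le> c i" using y i unfolding Yset_def by blast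
    moreover have "0 \<le> w i" using f i unfolding feasible_def by auto
    ultimately show "0 \<le> (c i - (y (i-1) - y i)) * w i" by simp
  qed
  moreover have "0 \<le> (C - y n) * w (n+1)"
    using y f by (auto simp: Yset_def feasible_def)
  ultimately show ?thesis using obj_eq_dual_plus_slack[OF n f, of c d C y] by linarith
qed

text \<open>Index 0 is unused: the waiting time of the first job is w_1 = 0.\<close>

primrec lindley_wait :: "(nat \<Rightarrow> real) \<Rightarrow> nat \<Rightarrow> real" where
  "lindley_wait x 0 = 0"
| "lindley_wait x (Suc i) = (if i = 0 then 0 else max 0 (lindley_wait x i + x i))"

definition idle_time :: "(nat \<Rightarrow> real) \<Rightarrow> nat \<Rightarrow> real" where
  "idle_time x i = max 0 (- (lindley_wait x i + x i))"

lemma lindley_wait_nonneg: "lindley_wait x i \<ge> 0"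
  by (cases i) auto

lemma feasible_lindley:
  "feasible n s u (lindley_wait (\<lambda>i. u i - s i)) (idle_time (\<lambda>i. u i - s i))"
  unfolding feasible_def
proof (intro conjI ballI)
  fix i assume "i \<in> {2..n+1}"
  then obtain j where "i = Suc j" "j \<ge> 1" by (cases i) auto
  then show "lindley_wait (\<lambda>i. u i - s i) i - idle_time (\<lambda>i. u i - s i) (i-1) =
      u (i-1) + lindley_wait (\<lambda>i. u i - s i) (i-1) - s (i-1)"
    by (simp add: idle_time_def)
qed (auto simp: idle_time_def lindley_wait_nonneg)

text \<open>Complementary slackness dictates the dual vector: the constraint
  y_(i-1) - y_i \<le> c_i must be tight where w_i > 0, and -y_i \<le> d_i must be tight where
  v_i > 0, which forces w_(i+1) = 0.\<close>

function dual_price :: "nat \<Rightarrow> (nat \<Rightarrow> real) \<Rightarrow> (nat \<Rightarrow> real) \<Rightarrow> real \<Rightarrow> (nat \<Rightarrow> real) \<Rightarrow> nat \<Rightarrow> real" where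
  "dual_price n c d C w i =
     (if n \<le> i then (if 0 < w (n+1) then C else - d n)
      else if 0 < w (i+1) then dual_price n c d C w (i+1) + c (i+1) else - d i)"
  by auto
termination by (relation "Wellfounded.measure (\<lambda>(n, c, d, C, w, i). n - i)") auto

declare dual_price.simps [simp del]

definition dual_witness :: "nat \<Rightarrow> (nat \<Rightarrow> real) \<Rightarrow> (nat \<Rightarrow> real) \<Rightarrow> real \<Rightarrow> (nat \<Rightarrow> real) \<Rightarrow> nat \<Rightarrow> real" where
  "dual_witness n c d C w i = (if i \<in> {1..n} then dual_price n c d C w i else 0)"

lemma dual_price_last: "dual_price n c d C w n = (if 0 < w (n+1) then C else - d n)"
  by (simp add: dual_price.simps)

lemma dual_price_step:
  "i < n \<Longrightarrow> dual_price n c d C w i =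
     (if 0 < w (i+1) then dual_price n c d C w (i+1) + c (i+1) else - d i)"
  by (simp add: dual_price.simps)

lemma dual_price_ge:
  assumes d: "\<forall>i\<in>{1..n}. d i \<ge> 0" and C: "C \<ge> 0"
    and cd: "\<forall>i\<in>{1..n-1}. d (i+1) - d i \<le> c (i+1)"
    and i: "1 \<le> i" "i \<le> n"
  shows "- d i \<le> dual_price n c d C w i"
  using i(2,1)
proof (induction i rule: inc_induct)
  case base
  then have "0 \<le> d n" using d by auto
  then show ?case using C by (auto simp: dual_price_last)
next
  case (step i)
  have "d (i+1) - d i \<le> c (i+1)" using cd step by auto
  then show ?case using step by (auto simp: dual_price_step)
qed

lemma dual_witness_in_Yset:
  assumes d: "\<forall>i\<in>{1..n}. d i \<ge> 0" and C: "C \<ge> 0"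
    and cd: "\<forall>i\<in>{1..n-1}. d (i+1) - d i \<le> c (i+1)"
  shows "dual_witness n c d C w \<in> Yset n c d C"
  unfolding Yset_def vecs_def
proof (intro CollectI conjI ballI allI impI)
  fix i assume i: "i \<in> {2..n}"
  then have "- d i \<le> dual_price n c d C w i" by (intro dual_price_ge[OF d C cd]) auto
  moreover have "d i - d (i-1) \<le> c i"
  proof -
    have "i - 1 \<in> {1..n-1}" "i - 1 + 1 = i" using i by auto
    then show ?thesis using cd by metis
  qed
  moreover have "dual_price n c d C w (i-1) =
      (if 0 < w i then dual_price n c d C w i + c i else - d (i-1))"
  proof -
    have "i - 1 < n" "i - 1 + 1 = i" using i by auto
    then show ?thesis using dual_price_step[of "i-1" n c d C w] by simp
  qed
  ultimately show "dual_witness n c d C w (i-1) - dual_witness n c d C w i \<le> c i"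
    using i by (auto simp: dual_witness_def)
next
  show "dual_witness n c d C w n \<le> C"
  proof (cases "n \<ge> 1")
    case True
    then have "0 \<le> d n" using d by auto
    then show ?thesis using C True by (simp add: dual_witness_def dual_price_last)
  qed (simp add: dual_witness_def C)
next
  fix i assume "i \<in> {1..n}"
  then show "- dual_witness n c d C w i \<le> d i"
    using dual_price_ge[OF d C cd, of i w] by (simp add: dual_witness_def)
qed (auto simp: dual_witness_def)

lemma complementary_slackness:
  fixes u s c d :: "nat \<Rightarrow> real" and C :: real
  assumes n: "n \<ge> 1"
  defines "x \<equiv> \<lambda>i. u i - s i"
  defines "w \<equiv> lindley_wait x" and "y \<equiv> dual_witness n c d C (lindley_wait x)"
  shows "obj n c d C w (idle_time x) = (\<Sum>i=1..n. y i * (u i - s i))"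
proof -
  have idle: "(d i + y i) * idle_time x i = 0" if i: "i \<in> {1..n}" for i
  proof (cases "idle_time x i > 0")
    case True
    then have "w (i+1) = 0" using i by (auto simp: w_def idle_time_def)
    then have "y i = - d i"
      using i by (cases "i = n") (auto simp: y_def w_def dual_witness_def dual_price_last dual_price_step)
    then show ?thesis by simp
  qed (auto simp: idle_time_def)
  have wait: "(c i - (y (i-1) - y i)) * w i = 0" if i: "i \<in> {2..n}" for i
  proof (cases "w i > 0")
    case True
    have "i - 1 < n" "i - 1 + 1 = i" using i by auto
    then have "y (i-1) = y i + c i"
      using True i dual_price_step[of "i-1" n c d C w] by (auto simp: y_def w_def dual_witness_def)
    then show ?thesis by simp
  qed (use lindley_wait_nonneg[of x i] in \<open>simp add: w_def\<close>)
  have last: "(C - y n) * w (n+1) = 0"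
    using n lindley_wait_nonneg[of x "n+1"]
    by (cases "w (n+1) > 0") (auto simp: y_def w_def dual_witness_def dual_price_last)
  have "obj n c d C w (idle_time x) = (\<Sum>i=1..n. y i * (u i - s i))
    + (\<Sum>i=1..n. (d i + y i) * idle_time x i) + (\<Sum>i=2..n. (c i - (y (i-1) - y i)) * w i)
    + (C - y n) * w (n+1)"
    unfolding w_def x_def by (rule obj_eq_dual_plus_slack[OF n feasible_lindley])
  moreover have "(\<Sum>i=1..n. (d i + y i) * idle_time x i) = 0" "(\<Sum>i=2..n. (c i - (y (i-1) - y i)) * w i) = 0"
    using idle wait by (simp_all add: sum.neutral)
  ultimately show ?thesis using last by simp
qed

lemma dual_le_fval:
  assumes n: "n \<ge> 1" and y: "y \<in> Yset n c d C"
  shows "(\<Sum>i=1..n. y i * (u i - s i)) \<le> fval n c d C s u"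
  unfolding fval_def using feasible_lindley weak_duality[OF n _ y]
  by (intro cInf_greatest) blast+

lemma strong_duality:
  assumes n: "n \<ge> 1" and d: "\<forall>i\<in>{1..n}. d i \<ge> 0" and C: "C \<ge> 0"
    and cd: "\<forall>i\<in>{1..n-1}. d (i+1) - d i \<le> c (i+1)"
  shows "\<exists>y\<in>Yset n c d C. fval n c d C s u = (\<Sum>i=1..n. y i * (u i - s i))"
proof -
  define x where "x = (\<lambda>i. u i - s i)"
  define y where "y = dual_witness n c d C (lindley_wait x)"
  have y_in: "y \<in> Yset n c d C" unfolding y_def by (rule dual_witness_in_Yset[OF d C cd])
  have "fval n c d C s u \<le> obj n c d C (lindley_wait x) (idle_time x)"
    unfolding fval_def x_def using feasible_lindley weak_duality[OF n _ y_in]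
    by (intro cInf_lower bdd_belowI) blast+
  also have "\<dots> = (\<Sum>i=1..n. y i * (u i - s i))"
    unfolding x_def y_def by (rule complementary_slackness[OF n])
  finally show ?thesis using dual_le_fval[OF n y_in, of u s] y_in by (intro bexI[of _ y]) auto
qed

lemma Yset_upper_bound:
  assumes y: "y \<in> Yset n c d C" and i: "1 \<le> i" "i \<le> n"
  shows "y i \<le> C + (\<Sum>j=i+1..n. c j)"
  using i(2,1)
proof (induction i rule: inc_induct)
  case base
  then show ?case using y by (simp add: Yset_def)
next
  case (step i)
  have "Suc i \<in> {2..n}" using step by auto
  then have "y i - y (Suc i) \<le> c (Suc i)" using y unfolding Yset_def by fastforce
  moreover have "(\<Sum>j=i+1..n. c j) = c (Suc i) + (\<Sum>j=Suc i+1..n. c j)"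
    using step by (simp add: sum.atLeast_Suc_atMost)
  ultimately show ?case using step by simp
qed

lemma Yset_abs_le:
  assumes c: "\<forall>i\<in>{1..n}. c i \<ge> 0" and d: "\<forall>i\<in>{1..n}. d i \<ge> 0" and C: "C \<ge> 0"
    and y: "y \<in> Yset n c d C"
  shows "\<bar>y i\<bar> \<le> C + (\<Sum>j=1..n. c j) + (\<Sum>j=1..n. d j)"
proof -
  have sums: "0 \<le> (\<Sum>j=1..n. c j)" "0 \<le> (\<Sum>j=1..n. d j)" using c d by (auto intro: sum_nonneg)
  show ?thesis
  proof (cases "i \<in> {1..n}")
    case False
    then have "y i = 0" using y by (auto simp: Yset_def vecs_def)
    then show ?thesis using sums C by simp
  next
    case True
    have "(\<Sum>j=i+1..n. c j) \<le> (\<Sum>j=1..n. c j)" using c by (intro sum_mono2) auto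
    moreover have "y i \<le> C + (\<Sum>j=i+1..n. c j)" using Yset_upper_bound[OF y] True by simp
    moreover have "- y i \<le> d i" using y True unfolding Yset_def by blast
    moreover have "d i \<le> (\<Sum>j=1..n. d j)" using d True by (intro member_le_sum) auto
    ultimately show ?thesis using sums C by linarith
  qed
qed

lemma continuous_on_coordinate [continuous_intros]: "continuous_on S (\<lambda>x. x i)"
  by (rule continuous_on_subset[OF continuous_on_product_coordinates]) simp

lemma compact_Yset:
  assumes c: "\<forall>i\<in>{1..n}. c i \<ge> 0" and d: "\<forall>i\<in>{1..n}. d i \<ge> 0" and C: "C \<ge> 0"
  shows "compact (Yset n c d C)"
proof -
  define B where "B = C + (\<Sum>j=1..n. c j) + (\<Sum>j=1..n. d j)"
  define K where "K = PiE UNIV (\<lambda>i. if i \<in> {1..n} then {-B..B} else {0::real})"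
  have "compactin (product_topology (\<lambda>i. euclidean) UNIV) K"
    unfolding K_def by (subst compactin_PiE) auto
  then have "compact K" by (simp add: euclidean_product_topology)
  moreover have "closed (Yset n c d C)"
  proof -
    have "Yset n c d C = (\<Inter>i\<in>-{1..n}. {y. y i = 0}) \<inter> (\<Inter>i\<in>{1..n}. {y. - y i \<le> d i})
       \<inter> (\<Inter>i\<in>{2..n}. {y. y (i-1) - y i \<le> c i}) \<inter> {y. y n \<le> C}"
      by (auto simp: Yset_def vecs_def)
    then show ?thesis
      by (simp only:) (intro closed_Int closed_INT ballI closed_Collect_eq closed_Collect_le
          continuous_intros)
  qed
  moreover have "Yset n c d C \<subseteq> K"
  proof
    fix y assume y: "y \<in> Yset n c d C"
    have "y i \<in> {-B..B}" for i using Yset_abs_le[OF c d C y, of i] by (auto simp: B_def)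
    moreover have "y i = 0" if "i \<notin> {1..n}" for i using y that by (simp add: Yset_def vecs_def)
    ultimately show "y \<in> K" by (auto simp: K_def)
  qed
  ultimately show ?thesis by (metis compact_Int_closed inf.absorb_iff2)
qed

lemma holder_inequality_sum:
  fixes a b :: "'i \<Rightarrow> real"
  assumes A: "finite A" and a: "\<forall>i\<in>A. a i \<ge> 0" and b: "\<forall>i\<in>A. b i \<ge> 0"
    and p: "p > 1" and q: "q > 1" and pq: "1/p + 1/q = 1"
  shows "(\<Sum>i\<in>A. a i * b i) \<le> (\<Sum>i\<in>A. a i powr p) powr (1/p) * (\<Sum>i\<in>A. b i powr q) powr (1/q)"
proof -
  define P where "P = (\<Sum>i\<in>A. a i powr p)"
  define Q where "Q = (\<Sum>i\<in>A. b i powr q)"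
  have "P \<ge> 0" "Q \<ge> 0" unfolding P_def Q_def by (auto intro: sum_nonneg)
  show ?thesis
  proof (cases "P = 0 \<or> Q = 0")
    case True
    then have "(\<forall>i\<in>A. a i = 0) \<or> (\<forall>i\<in>A. b i = 0)"
      using A unfolding P_def Q_def by (simp add: sum_nonneg_eq_0_iff)
    then have "(\<Sum>i\<in>A. a i * b i) = 0" by auto
    then show ?thesis by simp
  next
    case False
    then have PQ: "P > 0" "Q > 0" using \<open>P \<ge> 0\<close> \<open>Q \<ge> 0\<close> by auto
    define \<alpha> where "\<alpha> = P powr (1/p)"
    define \<beta> where "\<beta> = Q powr (1/q)"
    have pos: "\<alpha> > 0" "\<beta> > 0" using PQ by (auto simp: \<alpha>_def \<beta>_def)
    have "\<alpha> powr p = P" "\<beta> powr q = Q" using PQ p q by (auto simp: \<alpha>_def \<beta>_def powr_powr)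
    then have scaled: "(a i / \<alpha>) powr p = a i powr p / P" "(b i / \<beta>) powr q = b i powr q / Q"
      if "i \<in> A" for i
      using a b pos that by (simp_all add: powr_divide)
    have "(\<Sum>i\<in>A. (a i / \<alpha>) * (b i / \<beta>)) \<le> (\<Sum>i\<in>A. (a i / \<alpha>) powr p / p + (b i / \<beta>) powr q / q)"
      using a b pos by (intro sum_mono Youngs_inequality[OF p q pq]) auto
    also have "\<dots> = (\<Sum>i\<in>A. a i powr p) / (P * p) + (\<Sum>i\<in>A. b i powr q) / (Q * q)"
      by (simp add: scaled sum.distrib sum_divide_distrib)
    also have "\<dots> = 1" using PQ pq by (simp add: P_def Q_def)
    finally have "(\<Sum>i\<in>A. a i * b i) / (\<alpha> * \<beta>) \<le> 1"
      by (simp add: sum_divide_distrib)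
    then show ?thesis using pos by (simp add: \<alpha>_def \<beta>_def P_def Q_def pos_divide_le_eq)
  qed
qed

lemma sum_mult_le_qnorm_pnorm:
  fixes y z :: "nat \<Rightarrow> real" and p :: real and q :: ereal
  assumes p: "p \<ge> 1" and q: "q \<ge> 1" and pq: "ereal (1/p) + inverse q = 1" and n: "n \<ge> 1"
  shows "(\<Sum>i=1..n. y i * z i) \<le> qnorm n q y * pnorm n p z"
proof (cases "q = \<infinity>")
  case True
  then have "p = 1" using pq p by simp
  define M where "M = Max ((\<lambda>i. \<bar>y i\<bar>) ` {1..n})"
  have "(\<Sum>i=1..n. y i * z i) \<le> (\<Sum>i=1..n. M * \<bar>z i\<bar>)"
  proof (intro sum_mono)
    fix i assume "i \<in> {1..n}"
    then have "\<bar>y i\<bar> \<le> M" unfolding M_def by (intro Max_ge) auto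
    then have "\<bar>y i\<bar> * \<bar>z i\<bar> \<le> M * \<bar>z i\<bar>" by (intro mult_right_mono) auto
    then show "y i * z i \<le> M * \<bar>z i\<bar>" by (metis abs_ge_self abs_mult order_trans)
  qed
  also have "\<dots> = qnorm n q y * pnorm n p z"
    using True \<open>p = 1\<close> by (simp add: qnorm_def pnorm_def M_def sum_distrib_left sum_nonneg)
  finally show ?thesis .
next
  case False
  then obtain r where r: "q = ereal r" "r \<ge> 1" using q by (cases q) auto
  then have pr: "1/p + 1/r = 1" using pq by (simp add: inverse_eq_divide)
  then have "p > 1" "r > 1" using p r by (auto simp: order_le_less)
  have "(\<Sum>i=1..n. y i * z i) \<le> (\<Sum>i=1..n. \<bar>z i\<bar> * \<bar>y i\<bar>)"
    by (intro sum_mono) (metis abs_ge_self abs_mult mult.commute)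
  also have "\<dots> \<le> (\<Sum>i=1..n. \<bar>z i\<bar> powr p) powr (1/p) * (\<Sum>i=1..n. \<bar>y i\<bar> powr r) powr (1/r)"
    using \<open>p > 1\<close> \<open>r > 1\<close> pr by (intro holder_inequality_sum) auto
  also have "\<dots> = qnorm n q y * pnorm n p z"
    using r False by (simp add: qnorm_def pnorm_def)
  finally show ?thesis .
qed

lemma continuous_on_Max:
  fixes F :: "'i \<Rightarrow> 'a::topological_space \<Rightarrow> real"
  assumes "finite A" "A \<noteq> {}" "\<And>i. i \<in> A \<Longrightarrow> continuous_on S (F i)"
  shows "continuous_on S (\<lambda>x. Max ((\<lambda>i. F i x) ` A))"
  using assms
proof (induction A rule: finite_ne_induct)
  case (insert a A)
  then have "continuous_on S (\<lambda>x. max (F a x) (Max ((\<lambda>i. F i x) ` A)))"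
    by (intro continuous_on_max) auto
  then show ?case using insert by simp
qed simp

lemma continuous_on_qnorm:
  assumes n: "n \<ge> 1" and q: "q \<ge> 1"
  shows "continuous_on S (qnorm n q)"
proof (cases "q = \<infinity>")
  case True
  have "continuous_on S (\<lambda>y. Max ((\<lambda>i. \<bar>y i\<bar>) ` {1..n}))"
    using n by (intro continuous_on_Max continuous_intros) auto
  then show ?thesis using True by (simp add: qnorm_def[abs_def])
next
  case False
  then obtain r where r: "q = ereal r" "r \<ge> 1" using q by (cases q) auto
  have "continuous_on S (\<lambda>y. (\<Sum>i=1..n. \<bar>y i\<bar> powr r) powr (1 / r))"
    using r by (intro continuous_on_powr' continuous_intros) (auto intro: sum_nonneg)
  then show ?thesis using False r by (simp add: qnorm_def[abs_def])
qed

lemma continuous_on_of_abs_diff_le: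
  fixes f :: "'a::topological_space \<Rightarrow> real"
  assumes bound: "\<And>x z. x \<in> S \<Longrightarrow> z \<in> S \<Longrightarrow> \<bar>f x - f z\<bar> \<le> g x z"
    and cont: "\<And>z. z \<in> S \<Longrightarrow> continuous_on S (\<lambda>x. g x z)"
    and zero: "\<And>z. z \<in> S \<Longrightarrow> g z z = 0"
  shows "continuous_on S f"
  unfolding continuous_on_def
proof
  fix z assume z: "z \<in> S"
  have "((\<lambda>x. g x z) \<longlongrightarrow> g z z) (at z within S)"
    using cont[OF z] z unfolding continuous_on_def by blast
  then have "((\<lambda>x. g x z) \<longlongrightarrow> 0) (at z within S)"
    using zero[OF z] by simp
  moreover have "\<forall>\<^sub>F x in at z within S. norm (f x - f z) \<le> g x z"
    using bound z by (simp add: eventually_at_filter)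
  ultimately have "((\<lambda>x. f x - f z) \<longlongrightarrow> 0) (at z within S)"
    by (rule Lim_null_comparison[rotated])
  then show "(f \<longlongrightarrow> f z) (at z within S)" by (simp add: Lim_null[symmetric])
qed

lemma fval_diff_le_dual:
  assumes n: "n \<ge> 1" and d: "\<forall>i\<in>{1..n}. d i \<ge> 0" and C: "C \<ge> 0"
    and cd: "\<forall>i\<in>{1..n-1}. d (i+1) - d i \<le> c (i+1)"
  shows "\<exists>y\<in>Yset n c d C. fval n c d C s1 u1 - fval n c d C s2 u2
     \<le> (\<Sum>i=1..n. y i * ((u1 i - s1 i) - (u2 i - s2 i)))"
proof -
  obtain y where y: "y \<in> Yset n c d C" and e: "fval n c d C s1 u1 = (\<Sum>i=1..n. y i * (u1 i - s1 i))"
    using strong_duality[OF n d C cd] by blast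
  have "fval n c d C s1 u1 - fval n c d C s2 u2
      \<le> (\<Sum>i=1..n. y i * (u1 i - s1 i)) - (\<Sum>i=1..n. y i * (u2 i - s2 i))"
    using e dual_le_fval[OF n y, of u2 s2] by simp
  also have "\<dots> = (\<Sum>i=1..n. y i * ((u1 i - s1 i) - (u2 i - s2 i)))"
    by (simp add: sum_subtractf[symmetric] algebra_simps)
  finally show ?thesis using y by blast
qed

lemma fval_abs_diff_le:
  assumes n: "n \<ge> 1" and c: "\<forall>i\<in>{1..n}. c i \<ge> 0" and d: "\<forall>i\<in>{1..n}. d i \<ge> 0" and C: "C \<ge> 0"
    and cd: "\<forall>i\<in>{1..n-1}. d (i+1) - d i \<le> c (i+1)"
  shows "\<bar>fval n c d C s1 u1 - fval n c d C s2 u2\<bar> \<le>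
    (C + (\<Sum>j=1..n. c j) + (\<Sum>j=1..n. d j)) * (\<Sum>i=1..n. \<bar>(u1 i - s1 i) - (u2 i - s2 i)\<bar>)"
proof -
  define B where "B = C + (\<Sum>j=1..n. c j) + (\<Sum>j=1..n. d j)"
  have one_sided: "fval n c d C s1 u1 - fval n c d C s2 u2 \<le>
      B * (\<Sum>i=1..n. \<bar>(u1 i - s1 i) - (u2 i - s2 i)\<bar>)" for s1 u1 s2 u2
  proof -
    obtain y where y: "y \<in> Yset n c d C" and le: "fval n c d C s1 u1 - fval n c d C s2 u2
        \<le> (\<Sum>i=1..n. y i * ((u1 i - s1 i) - (u2 i - s2 i)))"
      using fval_diff_le_dual[OF n d C cd] by blast
    note le
    also have "(\<Sum>i=1..n. y i * ((u1 i - s1 i) - (u2 i - s2 i)))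
        \<le> (\<Sum>i=1..n. B * \<bar>(u1 i - s1 i) - (u2 i - s2 i)\<bar>)"
    proof (rule sum_mono)
      fix i
      let ?e = "(u1 i - s1 i) - (u2 i - s2 i)"
      have "y i * ?e \<le> \<bar>y i\<bar> * \<bar>?e\<bar>" using abs_ge_self[of "y i * ?e"] by (simp add: abs_mult)
      also have "\<dots> \<le> B * \<bar>?e\<bar>"
        using Yset_abs_le[OF c d C y, of i] by (intro mult_right_mono) (auto simp: B_def)
      finally show "y i * ?e \<le> B * \<bar>?e\<bar>" .
    qed
    finally show ?thesis by (simp add: sum_distrib_left)
  qed
  have "(\<Sum>i=1..n. \<bar>(u2 i - s2 i) - (u1 i - s1 i)\<bar>) = (\<Sum>i=1..n. \<bar>(u1 i - s1 i) - (u2 i - s2 i)\<bar>)"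
    by (simp add: abs_minus_commute)
  then show ?thesis
    using one_sided[of s1 u1 s2 u2] one_sided[of s2 u2 s1 u1] by (simp add: B_def abs_le_iff)
qed

lemma continuous_on_fval:
  assumes n: "n \<ge> 1" and c: "\<forall>i\<in>{1..n}. c i \<ge> 0" and d: "\<forall>i\<in>{1..n}. d i \<ge> 0" and C: "C \<ge> 0"
    and cd: "\<forall>i\<in>{1..n-1}. d (i+1) - d i \<le> c (i+1)"
  shows "continuous_on S (\<lambda>(s, u). fval n c d C s u)"
proof (rule continuous_on_of_abs_diff_le)
  let ?g = "\<lambda>(z::(nat \<Rightarrow> real) \<times> (nat \<Rightarrow> real)) z'.
    (C + (\<Sum>j=1..n. c j) + (\<Sum>j=1..n. d j)) *
    (\<Sum>i=1..n. \<bar>(snd z i - fst z i) - (snd z' i - fst z' i)\<bar>)"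
  show "\<bar>(case z of (s, u) \<Rightarrow> fval n c d C s u) - (case z' of (s, u) \<Rightarrow> fval n c d C s u)\<bar> \<le> ?g z z'"
    for z z' using fval_abs_diff_le[OF n c d C cd] by (simp add: case_prod_beta)
  have "continuous_on S (\<lambda>z. fst z i)" "continuous_on S (\<lambda>z. snd z i)" for i
    by (rule continuous_on_product_then_coordinatewise, rule continuous_on_fst continuous_on_snd,
        rule continuous_on_id)+
  then show "continuous_on S (\<lambda>z. ?g z z')" for z'
    by (intro continuous_intros)
  show "?g z z = 0" for z by simp
qed

lemma fval_lipschitz_pnorm:
  assumes n: "n \<ge> 1" and d: "\<forall>i\<in>{1..n}. d i \<ge> 0" and C: "C \<ge> 0"
    and cd: "\<forall>i\<in>{1..n-1}. d (i+1) - d i \<le> c (i+1)"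
    and p: "p \<ge> 1" and q: "q \<ge> 1" and pq: "ereal (1/p) + inverse q = 1"
    and L: "\<forall>y\<in>Yset n c d C. qnorm n q y \<le> L"
  shows "\<bar>fval n c d C s u1 - fval n c d C s u2\<bar> \<le> L * pnorm n p (\<lambda>i. u1 i - u2 i)"
proof -
  have one_sided: "fval n c d C s u1 - fval n c d C s u2 \<le> L * pnorm n p (\<lambda>i. u1 i - u2 i)"
    for u1 u2
  proof -
    obtain y where y: "y \<in> Yset n c d C" and le: "fval n c d C s u1 - fval n c d C s u2
        \<le> (\<Sum>i=1..n. y i * (u1 i - u2 i))"
      using fval_diff_le_dual[OF n d C cd, of s u1 s u2] by auto
    note le
    also have "\<dots> \<le> qnorm n q y * pnorm n p (\<lambda>i. u1 i - u2 i)"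
      by (rule sum_mult_le_qnorm_pnorm[OF p q pq n])
    also have "\<dots> \<le> L * pnorm n p (\<lambda>i. u1 i - u2 i)"
      using L y by (intro mult_right_mono) (auto simp: pnorm_def)
    finally show ?thesis .
  qed
  have "pnorm n p (\<lambda>i. u2 i - u1 i) = pnorm n p (\<lambda>i. u1 i - u2 i)"
    unfolding pnorm_def by (simp add: abs_minus_commute)
  then show ?thesis using one_sided[of u1 u2] one_sided[of u2 u1] by (simp add: abs_le_iff)
qed

theorem lemma5:
  fixes n :: nat and T C p :: real and q :: ereal
    and c d :: "nat \<Rightarrow> real" and U :: "(nat \<Rightarrow> real) set"
  assumes n: "n \<ge> 1" and T: "T > 0"
    and U: "U \<subseteq> vecs n"
    and c: "\<forall>i\<in>{1..n}. c i \<ge> 0" and d: "\<forall>i\<in>{1..n}. d i \<ge> 0" and C: "C \<ge> 0"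
    and cd: "\<forall>i\<in>{1..n-1}. d (i+1) - d i \<le> c (i+1)"
    and p: "p \<ge> 1" and q: "q \<ge> 1" and pq: "ereal (1/p) + inverse q = 1"
  shows "continuous_on (Sset n T \<times> U) (\<lambda>(s, u). fval n c d C s u)
       \<and> (\<exists>L. (\<exists>y\<in>Yset n c d C. qnorm n q y = L) \<and> (\<forall>y\<in>Yset n c d C. qnorm n q y \<le> L)
            \<and> (\<forall>s\<in>Sset n T. \<forall>u1\<in>U. \<forall>u2\<in>U.
                 \<bar>fval n c d C s u1 - fval n c d C s u2\<bar> \<le> L * pnorm n p (\<lambda>i. u1 i - u2 i)))"
proof
  show "continuous_on (Sset n T \<times> U) (\<lambda>(s, u). fval n c d C s u)"
    by (rule continuous_on_fval[OF n c d C cd])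
next
  have "(\<lambda>i. 0) \<in> Yset n c d C" using c d C by (auto simp: Yset_def vecs_def)
  then obtain y where "y \<in> Yset n c d C" and max: "\<forall>y'\<in>Yset n c d C. qnorm n q y' \<le> qnorm n q y"
    using continuous_attains_sup[OF compact_Yset[OF c d C] _ continuous_on_qnorm[OF n q]] by blast
  then show "\<exists>L. (\<exists>y\<in>Yset n c d C. qnorm n q y = L) \<and> (\<forall>y\<in>Yset n c d C. qnorm n q y \<le> L)
      \<and> (\<forall>s\<in>Sset n T. \<forall>u1\<in>U. \<forall>u2\<in>U.
           \<bar>fval n c d C s u1 - fval n c d C s u2\<bar> \<le> L * pnorm n p (\<lambda>i. u1 i - u2 i))"
    using fval_lipschitz_pnorm[OF n d C cd p q pq max] by blast
qed

end
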